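(* Let $S\subseteq M_n$ and $T\subseteq M_{n'}$ be noncommutative graphs. Then (1) for every $n\times n$ unitary matrix $U$, $\mathcal{H}(S)=\mathcal{H}(U^\dagger SU)$, where $U^\dagger SU=\{U^\dagger AU: A\in S\}$; and (2) $\mathcal{H}(S\oplus T)=\mathcal{H}(S)+\mathcal{H}(T)$, where $S\oplus T=\{A\oplus B: A\in S, B\in T\}\subseteq M_{n+n'}$ is the space of block-diagonal matrices.
   Context: All scalars are complex; $M_n$ denotes complex $n\times n$ matrices. A noncommutative graph is a linear subspace $S\subseteq M_n$ that contains $I_n$ and is closed under conjugate transpose. For a subspace $S\subseteq M_n$, $M_m(S)$ denotes the set of $m\times m$ block matrices $B=[B_{i,j}]_{i,j\in[m]}$ with every block $B_{i,j}\in S$, viewed as elements of $M_{mn}$. The Haemers bound is $\mathcal{H}(S)=\min\{\mathrm{rk}(B):\ m\in\mathbb{N},\ B\in M_m(S),\ \sum_{i=1}^m B_{i,i}=I_n\}$. *)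

theory Defs
  imports "Jordan_Normal_Form.Schur_Decomposition" "Jordan_Normal_Form.DL_Rank"
begin

definition crank :: "complex mat \<Rightarrow> nat" where
  "crank A = vec_space.rank (dim_row A) A"

definition nc_graph :: "nat \<Rightarrow> complex mat set \<Rightarrow> bool" where
  "nc_graph n S \<longleftrightarrow> S \<subseteq> carrier_mat n n \<and> 0\<^sub>m n n \<in> S
     \<and> (\<forall>A\<in>S. \<forall>B\<in>S. A + B \<in> S)
     \<and> (\<forall>c::complex. \<forall>A\<in>S. c \<cdot>\<^sub>m A \<in> S)
     \<and> 1\<^sub>m n \<in> S
     \<and> (\<forall>A\<in>S. mat_adjoint A \<in> S)"

definition block_mat :: "nat \<Rightarrow> nat \<Rightarrow> (nat \<Rightarrow> nat \<Rightarrow> complex mat) \<Rightarrow> complex mat" where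
  "block_mat m n B = mat (m * n) (m * n) (\<lambda>(i, j). B (i div n) (j div n) $$ (i mod n, j mod n))"

definition diag_block_sum :: "nat \<Rightarrow> nat \<Rightarrow> (nat \<Rightarrow> nat \<Rightarrow> complex mat) \<Rightarrow> complex mat" where
  "diag_block_sum m n B = mat n n (\<lambda>(a, b). \<Sum>i<m. B i i $$ (a, b))"

definition haemers :: "nat \<Rightarrow> complex mat set \<Rightarrow> nat" where
  "haemers n S = Inf {crank (block_mat m n B) | m B.
       (\<forall>i<m. \<forall>j<m. B i j \<in> S) \<and> diag_block_sum m n B = 1\<^sub>m n}"

definition unitary_mat :: "nat \<Rightarrow> complex mat \<Rightarrow> bool" where
  "unitary_mat n U \<longleftrightarrow> U \<in> carrier_mat n n \<and> mat_adjoint U * U = 1\<^sub>m n \<and> U * mat_adjoint U = 1\<^sub>m n"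

definition conj_space :: "complex mat \<Rightarrow> complex mat set \<Rightarrow> complex mat set" where
  "conj_space U S = (\<lambda>A. mat_adjoint U * A * U) ` S"

definition dsum_space :: "nat \<Rightarrow> nat \<Rightarrow> complex mat set \<Rightarrow> complex mat set \<Rightarrow> complex mat set" where
  "dsum_space n n' S T = (\<lambda>(A, B). four_block_mat A (0\<^sub>m n n') (0\<^sub>m n' n) B) ` (S \<times> T)"

end

theory Submission
  imports Defs "Jordan_Normal_Form.Matrix_Kernel"
begin

text \<open>Conjugating every block by a unitary \<open>U\<close>
  conjugates the whole matrix by the block-diagonal matrix \<open>diag(U, \<dots>, U)\<close>, so it gives a feasible
  matrix for \<open>U\<^sup>* S U\<close> of the same rank; applying this to \<open>U\<close> and to \<open>U\<^sup>*\<close> gives invariance.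
  A block matrix with blocks \<open>A\<^sub>i\<^sub>j \<oplus> B\<^sub>i\<^sub>j\<close> becomes \<open>[A\<^sub>i\<^sub>j] \<oplus> [B\<^sub>i\<^sub>j]\<close> after a simultaneous
  permutation of rows and columns, so ranks add and feasibility splits into feasibility for \<open>S\<close>
  and for \<open>T\<close>; conversely, optimal matrices for \<open>S\<close> and \<open>T\<close> are padded with zero blocks to a
  common number of blocks and combined blockwise.\<close>

section \<open>Rank\<close>

lemma crank_add_kernel_dim:
  assumes A: "A \<in> carrier_mat k k"
  shows "crank A + kernel.dim k A = k"
proof -
  interpret VS: vec_space "TYPE(complex)" k .
  interpret K: kernel k k A by (unfold_locales, rule A)
  interpret L: linear_map class_ring "module_vec TYPE(complex) k" "module_vec TYPE(complex) k"
    "\<lambda>v. A *\<^sub>v v"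
  proof (unfold_locales)
    show "(\<lambda>v. A *\<^sub>v v) \<in> LinearCombinations.module_hom class_ring
        (module_vec TYPE(complex) k) (module_vec TYPE(complex) k)"
      unfolding LinearCombinations.module_hom_def using A
      by (auto simp: module_vec_simps mult_add_distrib_mat_vec mult_mat_vec)
  qed
  have im: "L.imT = VS.col_space A"
    unfolding L.im_def VS.col_space_eq[OF A] using A by (auto simp: module_vec_simps)
  have ker: "L.kerT = mat_kernel A"
    unfolding L.ker_def mat_kernel_def using A by (auto simp: module_vec_simps)
  have "crank A = VS.rank A" using A by (simp add: crank_def)
  then show ?thesis using L.rank_nullity[OF VS.fin_dim] VS.dim_is_n A
    unfolding VS.rank_def im ker VS.col_space_def by simp
qed

lemma crank_similar:
  assumes A: "A \<in> carrier_mat k k" and wit: "similar_mat_wit A B P Q"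
  shows "crank A = crank B"
proof -
  have B: "B \<in> carrier_mat k k" using similar_mat_witD2[OF A wit] by auto
  show ?thesis using crank_add_kernel_dim[OF A] crank_add_kernel_dim[OF B]
    similar_mat_wit_kernel_dim[OF A wit] by simp
qed

lemma crank_zero_mat: "crank (0\<^sub>m k k) = 0"
  unfolding crank_def using vec_space.rank_0I by simp

lemma crank_four_block_diag:
  assumes A: "A \<in> carrier_mat a a" and D: "D \<in> carrier_mat d d"
  shows "crank (four_block_mat A (0\<^sub>m a d) (0\<^sub>m d a) D) = crank A + crank D"
proof -
  have F: "four_block_mat A (0\<^sub>m a d) (0\<^sub>m d a) D \<in> carrier_mat (a + d) (a + d)"
    using A D by auto
  show ?thesis
    using crank_add_kernel_dim[OF A] crank_add_kernel_dim[OF D] crank_add_kernel_dim[OF F]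
      kernel_four_block_0_mat[OF refl A D]
    by simp
qed

lemma crank_reindex:
  assumes X: "X \<in> carrier_mat N N"
    and maps: "\<sigma> ` {..<N} \<subseteq> {..<N}" and inj: "inj_on \<sigma> {..<N}"
  shows "crank (mat N N (\<lambda>(i, j). X $$ (\<sigma> i, \<sigma> j))) = crank X"
proof -
  define P where "P = mat N N (\<lambda>(i, j). of_bool (j = \<sigma> i) :: complex)"
  define Q where "Q = mat N N (\<lambda>(i, j). of_bool (i = \<sigma> j) :: complex)"
  have P: "P \<in> carrier_mat N N" and Q: "Q \<in> carrier_mat N N" unfolding P_def Q_def by auto
  have \<sigma>_less: "\<sigma> i < N" if "i < N" for i using maps that by auto
  have "P * X = mat N N (\<lambda>(i, l). X $$ (\<sigma> i, l))"
    by (rule eq_matI) (use X \<sigma>_less in \<open>simp_all add: P_def scalar_prod_def\<close>)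
  then have "P * X * Q = mat N N (\<lambda>(i, j). X $$ (\<sigma> i, \<sigma> j))"
    by (intro eq_matI) (use \<sigma>_less in \<open>simp_all add: Q_def scalar_prod_def\<close>)
  moreover have PQ: "P * Q = 1\<^sub>m N"
    by (rule eq_matI)
      (use \<sigma>_less in \<open>simp_all add: P_def Q_def scalar_prod_def inj_on_eq_iff[OF inj]\<close>)
  ultimately have "similar_mat_wit (mat N N (\<lambda>(i, j). X $$ (\<sigma> i, \<sigma> j))) X P Q"
    unfolding similar_mat_wit_def Let_def
    using P Q X mat_mult_left_right_inverse[OF P Q PQ] by auto
  from crank_similar[OF _ this, of N] show ?thesis by simp
qed

section \<open>Block matrices\<close>

lemma block_mat_carrier [simp]: "block_mat m n B \<in> carrier_mat (m * n) (m * n)"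
  unfolding block_mat_def by auto

lemma block_mat_dims [simp]:
  "dim_row (block_mat m n B) = m * n" "dim_col (block_mat m n B) = m * n"
  unfolding block_mat_def by auto

lemma block_mat_index:
  "r < m * n \<Longrightarrow> s < m * n \<Longrightarrow>
    block_mat m n B $$ (r, s) = B (r div n) (s div n) $$ (r mod n, s mod n)"
  unfolding block_mat_def by auto

lemma block_mat_cong:
  "(\<And>i j. i < m \<Longrightarrow> j < m \<Longrightarrow> B i j = C i j) \<Longrightarrow> block_mat m n B = block_mat m n C"
  unfolding block_mat_def by (rule cong_mat) (auto simp: less_mult_imp_div_less)

lemma block_mat_mult_index:
  assumes A: "\<And>i j. i < m \<Longrightarrow> j < m \<Longrightarrow> A i j \<in> carrier_mat n n"
    and B: "\<And>i j. i < m \<Longrightarrow> j < m \<Longrightarrow> B i j \<in> carrier_mat n n"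
    and r: "r < m * n" and s: "s < m * n"
  shows "(block_mat m n A * block_mat m n B) $$ (r, s)
    = (\<Sum>l<m. (A (r div n) l * B l (s div n)) $$ (r mod n, s mod n))"
proof -
  have n: "0 < n" using r by (cases n) auto
  have q: "r div n < m" "s div n < m" using r s by (simp_all add: less_mult_imp_div_less)
  define f where
    "f x = A (r div n) (x div n) $$ (r mod n, x mod n) * B (x div n) (s div n) $$ (x mod n, s mod n)"
    for x
  have "(block_mat m n A * block_mat m n B) $$ (r, s) = (\<Sum>x<m * n. f x)"
    using r s by (simp add: scalar_prod_def block_mat_index f_def atLeast0LessThan)
  also have "\<dots> = (\<Sum>l<m. \<Sum>x\<in>{l * n..<l * n + n}. f x)"
    by (rule sum.nat_group[symmetric])
  also have "\<dots> = (\<Sum>l<m. \<Sum>c<n. A (r div n) l $$ (r mod n, c) * B l (s div n) $$ (c, s mod n))"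
    by (rule sum.cong[OF refl]) (simp add: sum.atLeastLessThan_shift_0 f_def atLeast0LessThan)
  also have "\<dots> = (\<Sum>l<m. (A (r div n) l * B l (s div n)) $$ (r mod n, s mod n))"
  proof (rule sum.cong[OF refl])
    fix l assume "l \<in> {..<m}"
    then have "A (r div n) l \<in> carrier_mat n n" "B l (s div n) \<in> carrier_mat n n"
      using A B q by auto
    then show "(\<Sum>c<n. A (r div n) l $$ (r mod n, c) * B l (s div n) $$ (c, s mod n))
      = (A (r div n) l * B l (s div n)) $$ (r mod n, s mod n)"
      using n by (simp add: scalar_prod_def atLeast0LessThan)
  qed
  finally show ?thesis .
qed

definition block_diag :: "nat \<Rightarrow> nat \<Rightarrow> (nat \<Rightarrow> complex mat) \<Rightarrow> complex mat" where
  "block_diag m n D = block_mat m n (\<lambda>i j. if i = j then D i else 0\<^sub>m n n)"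

lemma block_diag_carrier [simp]: "block_diag m n D \<in> carrier_mat (m * n) (m * n)"
  unfolding block_diag_def by simp

lemma block_diag_mult_block_mat:
  assumes D: "\<And>i. i < m \<Longrightarrow> D i \<in> carrier_mat n n"
    and B: "\<And>i j. i < m \<Longrightarrow> j < m \<Longrightarrow> B i j \<in> carrier_mat n n"
  shows "block_diag m n D * block_mat m n B = block_mat m n (\<lambda>i j. D i * B i j)"
    (is "?L = ?R")
proof (rule eq_matI)
  fix r s assume "r < dim_row ?R" "s < dim_col ?R"
  then have r: "r < m * n" and s: "s < m * n" by auto
  have q: "r div n < m" "s div n < m" using r s by (simp_all add: less_mult_imp_div_less)
  have n: "0 < n" using r by (cases n) auto
  have "?L $$ (r, s)
      = (\<Sum>l<m. ((if r div n = l then D (r div n) else 0\<^sub>m n n) * B l (s div n)) $$ (r mod n, s mod n))"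
    unfolding block_diag_def using D B r s by (subst block_mat_mult_index) auto
  also have "\<dots> = (\<Sum>l<m. if l = r div n then (D (r div n) * B l (s div n)) $$ (r mod n, s mod n) else 0)"
  proof (intro sum.cong refl)
    fix l assume "l \<in> {..<m}"
    then have "B l (s div n) \<in> carrier_mat n n" using B q by simp
    moreover have "r mod n < n" "s mod n < n" using n by simp_all
    ultimately show "((if r div n = l then D (r div n) else 0\<^sub>m n n) * B l (s div n)) $$ (r mod n, s mod n)
      = (if l = r div n then (D (r div n) * B l (s div n)) $$ (r mod n, s mod n) else 0)"
      by (auto simp: left_mult_zero_mat)
  qed
  also have "\<dots> = ?R $$ (r, s)"
    using q r s by (simp add: block_mat_index)
  finally show "?L $$ (r, s) = ?R $$ (r, s)" .
qed (auto simp: block_diag_def)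

lemma block_mat_mult_block_diag:
  assumes E: "\<And>j. j < m \<Longrightarrow> E j \<in> carrier_mat n n"
    and B: "\<And>i j. i < m \<Longrightarrow> j < m \<Longrightarrow> B i j \<in> carrier_mat n n"
  shows "block_mat m n B * block_diag m n E = block_mat m n (\<lambda>i j. B i j * E j)"
    (is "?L = ?R")
proof (rule eq_matI)
  fix r s assume "r < dim_row ?R" "s < dim_col ?R"
  then have r: "r < m * n" and s: "s < m * n" by auto
  have q: "r div n < m" "s div n < m" using r s by (simp_all add: less_mult_imp_div_less)
  have n: "0 < n" using r by (cases n) auto
  have "?L $$ (r, s)
      = (\<Sum>l<m. (B (r div n) l * (if l = s div n then E l else 0\<^sub>m n n)) $$ (r mod n, s mod n))"
    unfolding block_diag_def using E B r s by (subst block_mat_mult_index) auto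
  also have "\<dots> = (\<Sum>l<m. if l = s div n then (B (r div n) l * E l) $$ (r mod n, s mod n) else 0)"
  proof (intro sum.cong refl)
    fix l assume "l \<in> {..<m}"
    then have "B (r div n) l \<in> carrier_mat n n" using B q by simp
    moreover have "r mod n < n" "s mod n < n" using n by simp_all
    ultimately show "(B (r div n) l * (if l = s div n then E l else 0\<^sub>m n n)) $$ (r mod n, s mod n)
      = (if l = s div n then (B (r div n) l * E l) $$ (r mod n, s mod n) else 0)"
      by (auto simp: right_mult_zero_mat)
  qed
  also have "\<dots> = ?R $$ (r, s)"
    using q r s by (simp add: block_mat_index)
  finally show "?L $$ (r, s) = ?R $$ (r, s)" .
qed (auto simp: block_diag_def)

lemma block_diag_mult:
  assumes "\<And>i. i < m \<Longrightarrow> D i \<in> carrier_mat n n" "\<And>i. i < m \<Longrightarrow> E i \<in> carrier_mat n n"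
  shows "block_diag m n D * block_diag m n E = block_diag m n (\<lambda>i. D i * E i)"
  using assms unfolding block_diag_def[of m n E]
  by (subst block_diag_mult_block_mat)
    (auto simp: block_diag_def right_mult_zero_mat intro!: block_mat_cong)

lemma block_diag_one: "block_diag m n (\<lambda>_. 1\<^sub>m n) = 1\<^sub>m (m * n)" (is "?L = ?R")
proof (rule eq_matI)
  fix r s assume "r < dim_row ?R" "s < dim_col ?R"
  then have r: "r < m * n" and s: "s < m * n" by auto
  have "0 < n" using r by (cases n) auto
  moreover have "r = s \<longleftrightarrow> r div n = s div n \<and> r mod n = s mod n"
    by (metis div_mult_mod_eq)
  ultimately show "?L $$ (r, s) = ?R $$ (r, s)"
    using r s by (auto simp: block_diag_def block_mat_index)
qed (auto simp: block_diag_def)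

lemma crank_block_mat_conj:
  assumes V: "V \<in> carrier_mat n n" and U: "U \<in> carrier_mat n n" and VU: "V * U = 1\<^sub>m n"
    and B: "\<And>i j. i < m \<Longrightarrow> j < m \<Longrightarrow> B i j \<in> carrier_mat n n"
  shows "crank (block_mat m n (\<lambda>i j. V * B i j * U)) = crank (block_mat m n B)"
proof -
  define P where "P = block_diag m n (\<lambda>_. V)"
  define Q where "Q = block_diag m n (\<lambda>_. U)"
  have P: "P \<in> carrier_mat (m * n) (m * n)" and Q: "Q \<in> carrier_mat (m * n) (m * n)"
    unfolding P_def Q_def by simp_all
  have "P * block_mat m n B * Q = block_mat m n (\<lambda>i j. V * B i j * U)"
    unfolding P_def Q_def using V U B
    by (simp add: block_diag_mult_block_mat block_mat_mult_block_diag)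
  moreover have PQ: "P * Q = 1\<^sub>m (m * n)"
    unfolding P_def Q_def using V U VU by (simp add: block_diag_mult block_diag_one)
  ultimately have "similar_mat_wit (block_mat m n (\<lambda>i j. V * B i j * U)) (block_mat m n B) P Q"
    unfolding similar_mat_wit_def Let_def
    using P Q mat_mult_left_right_inverse[OF P Q PQ] by auto
  then show ?thesis by (rule crank_similar[OF block_mat_carrier])
qed

lemma block_mat_pad:
  "block_mat (m + d) n (\<lambda>i j. if i < m \<and> j < m then B i j else 0\<^sub>m n n)
    = four_block_mat (block_mat m n B)
        (0\<^sub>m (m * n) (d * n)) (0\<^sub>m (d * n) (m * n)) (0\<^sub>m (d * n) (d * n))"
    (is "?L = ?R")
proof (rule eq_matI)
  fix r s assume "r < dim_row ?R" "s < dim_col ?R"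
  then have r: "r < (m + d) * n" and s: "s < (m + d) * n" by (simp_all add: algebra_simps)
  have n: "0 < n" using r by (cases n) auto
  have "r < m * n \<longleftrightarrow> r div n < m" "s < m * n \<longleftrightarrow> s div n < m"
    using div_less_iff_less_mult[OF n] by (auto simp: mult.commute)
  then show "?L $$ (r, s) = ?R $$ (r, s)"
    using r s n by (auto simp: block_mat_index algebra_simps)
qed (auto simp: algebra_simps)

lemma crank_block_mat_pad:
  "crank (block_mat (m + d) n (\<lambda>i j. if i < m \<and> j < m then B i j else 0\<^sub>m n n))
    = crank (block_mat m n B)"
  unfolding block_mat_pad by (simp add: crank_four_block_diag crank_zero_mat)

lemma diag_block_sum_carrier [simp]: "diag_block_sum m n B \<in> carrier_mat n n"
  unfolding diag_block_sum_def by simp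

lemma diag_block_sum_dims [simp]:
  "dim_row (diag_block_sum m n B) = n" "dim_col (diag_block_sum m n B) = n"
  unfolding diag_block_sum_def by simp_all

lemma diag_block_sum_mult:
  assumes P: "P \<in> carrier_mat n n" and Q: "Q \<in> carrier_mat n n"
    and B: "\<And>i. i < m \<Longrightarrow> B i i \<in> carrier_mat n n"
  shows "diag_block_sum m n (\<lambda>i j. P * B i j * Q) = P * diag_block_sum m n B * Q"
  using B
proof (induction m)
  case 0
  have "diag_block_sum 0 n B = 0\<^sub>m n n" by (rule eq_matI) (auto simp: diag_block_sum_def)
  moreover have "diag_block_sum 0 n (\<lambda>i j. P * B i j * Q) = 0\<^sub>m n n"
    by (rule eq_matI) (auto simp: diag_block_sum_def)
  ultimately show ?case using P Q by simp
next
  case (Suc m)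
  have Bm: "B m m \<in> carrier_mat n n" using Suc.prems by simp
  have step: "diag_block_sum (Suc m) n C = diag_block_sum m n C + C m m"
    if "C m m \<in> carrier_mat n n" for C
    using that by (intro eq_matI) (auto simp: diag_block_sum_def)
  have "diag_block_sum (Suc m) n (\<lambda>i j. P * B i j * Q)
      = diag_block_sum m n (\<lambda>i j. P * B i j * Q) + P * B m m * Q"
    using P Q Bm by (intro step[of "\<lambda>i j. P * B i j * Q"]) auto
  also have "\<dots> = P * diag_block_sum m n B * Q + P * B m m * Q"
    using Suc by simp
  also have "\<dots> = (P * diag_block_sum m n B + P * B m m) * Q"
    using P Q Bm by (intro add_mult_distrib_mat[symmetric]) auto
  also have "\<dots> = P * (diag_block_sum m n B + B m m) * Q"
    using mult_add_distrib_mat[OF P diag_block_sum_carrier Bm] by simp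
  finally show ?case using step[of B, OF Bm] by simp
qed

lemma diag_block_sum_pad:
  "diag_block_sum (m + d) n (\<lambda>i j. if i < m \<and> j < m then B i j else 0\<^sub>m n n) = diag_block_sum m n B"
  (is "?L = ?R")
proof (rule eq_matI)
  fix a b assume "a < dim_row ?R" "b < dim_col ?R"
  then have a: "a < n" and b: "b < n" by simp_all
  have "(\<Sum>i<m + d. (if i < m \<and> i < m then B i i else 0\<^sub>m n n) $$ (a, b))
    = (\<Sum>i<m + d. if i < m then B i i $$ (a, b) else 0)"
    using a b by (intro sum.cong) auto
  also have "\<dots> = (\<Sum>i\<in>{i \<in> {..<m + d}. i < m}. B i i $$ (a, b))"
    by (rule sum.inter_filter[symmetric]) simp
  also have "{i \<in> {..<m + d}. i < m} = {..<m}" by auto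
  finally show "?L $$ (a, b) = ?R $$ (a, b)"
    using a b by (simp add: diag_block_sum_def)
qed simp_all

lemma diag_block_sum_four_block:
  assumes B: "\<And>i. i < M \<Longrightarrow> B i i \<in> carrier_mat n n"
    and C: "\<And>i. i < M \<Longrightarrow> C i i \<in> carrier_mat n' n'"
  shows "diag_block_sum M (n + n') (\<lambda>i j. four_block_mat (B i j) (0\<^sub>m n n') (0\<^sub>m n' n) (C i j))
    = four_block_mat (diag_block_sum M n B) (0\<^sub>m n n') (0\<^sub>m n' n) (diag_block_sum M n' C)"
    (is "?L = ?R")
proof (rule eq_matI)
  fix a b assume "a < dim_row ?R" "b < dim_col ?R"
  then have a: "a < n + n'" and b: "b < n + n'" by simp_all
  have "(\<Sum>i<M. four_block_mat (B i i) (0\<^sub>m n n') (0\<^sub>m n' n) (C i i) $$ (a, b))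
    = (\<Sum>i<M. if a < n then if b < n then B i i $$ (a, b) else 0
              else if b < n then 0 else C i i $$ (a - n, b - n))"
  proof (intro sum.cong refl)
    fix i assume "i \<in> {..<M}"
    then have "B i i \<in> carrier_mat n n" "C i i \<in> carrier_mat n' n'" using B C by simp_all
    then show "four_block_mat (B i i) (0\<^sub>m n n') (0\<^sub>m n' n) (C i i) $$ (a, b)
      = (if a < n then if b < n then B i i $$ (a, b) else 0
         else if b < n then 0 else C i i $$ (a - n, b - n))"
      using a b by simp
  qed
  then show "?L $$ (a, b) = ?R $$ (a, b)"
    using a b by (cases "a < n"; cases "b < n") (auto simp: diag_block_sum_def)
qed auto

section \<open>Feasible block matrices\<close>

definition haemers_feasible ::
  "nat \<Rightarrow> complex mat set \<Rightarrow> nat \<Rightarrow> (nat \<Rightarrow> nat \<Rightarrow> complex mat) \<Rightarrow> bool" where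
  "haemers_feasible n S m B \<longleftrightarrow> (\<forall>i<m. \<forall>j<m. B i j \<in> S) \<and> diag_block_sum m n B = 1\<^sub>m n"

lemma haemers_Inf_feasible:
  "haemers n S = Inf {crank (block_mat m n B) | m B. haemers_feasible n S m B}"
  unfolding haemers_def haemers_feasible_def ..

lemma haemers_le_crank: "haemers_feasible n S m B \<Longrightarrow> haemers n S \<le> crank (block_mat m n B)"
  unfolding haemers_Inf_feasible by (rule cInf_lower) auto

lemma haemers_attained:
  assumes "1\<^sub>m n \<in> S"
  obtains m B where "haemers_feasible n S m B" "crank (block_mat m n B) = haemers n S"
proof -
  have "diag_block_sum 1 n (\<lambda>_ _. 1\<^sub>m n) = 1\<^sub>m n"
    by (rule eq_matI) (auto simp: diag_block_sum_def)
  then have "haemers_feasible n S 1 (\<lambda>_ _. 1\<^sub>m n)"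
    using assms unfolding haemers_feasible_def by simp
  then have "{crank (block_mat m n B) | m B. haemers_feasible n S m B} \<noteq> {}" by blast
  then have "haemers n S \<in> {crank (block_mat m n B) | m B. haemers_feasible n S m B}"
    unfolding haemers_Inf_feasible by (rule Inf_nat_def1)
  then show ?thesis using that by force
qed

lemma haemers_feasible_cong:
  "(\<And>i j. i < m \<Longrightarrow> j < m \<Longrightarrow> B i j = B' i j) \<Longrightarrow>
    haemers_feasible n S m B \<longleftrightarrow> haemers_feasible n S m B'"
  unfolding haemers_feasible_def diag_block_sum_def by (auto intro!: cong_mat sum.cong)

lemma haemers_feasible_pad:
  assumes "0\<^sub>m n n \<in> S" and "haemers_feasible n S m B"
  shows "haemers_feasible n S (m + d) (\<lambda>i j. if i < m \<and> j < m then B i j else 0\<^sub>m n n)"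
  using assms unfolding haemers_feasible_def diag_block_sum_pad by auto

lemma nc_graphD:
  assumes "nc_graph n S"
  shows "S \<subseteq> carrier_mat n n" "0\<^sub>m n n \<in> S" "1\<^sub>m n \<in> S"
  using assms unfolding nc_graph_def by auto

section \<open>Unitary invariance\<close>

lemma mat_adjoint_dims [simp]:
  "dim_row (mat_adjoint A) = dim_col A" "dim_col (mat_adjoint A) = dim_row A"
  unfolding mat_adjoint_def by auto

lemma mat_adjoint_carrier: "A \<in> carrier_mat r c \<Longrightarrow> mat_adjoint A \<in> carrier_mat c r"
  by auto

lemma mat_adjoint_index:
  "i < dim_col A \<Longrightarrow> j < dim_row A \<Longrightarrow> mat_adjoint A $$ (i, j) = cnj (A $$ (j, i))"
  unfolding mat_adjoint_def by (simp add: mat_of_rows_index)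

lemma mat_adjoint_adjoint: "mat_adjoint (mat_adjoint A) = (A :: complex mat)"
  by (rule eq_matI) (auto simp: mat_adjoint_index)

lemma unitary_matD:
  assumes "unitary_mat n U"
  shows "U \<in> carrier_mat n n" "mat_adjoint U \<in> carrier_mat n n"
    "mat_adjoint U * U = 1\<^sub>m n" "U * mat_adjoint U = 1\<^sub>m n"
  using assms unfolding unitary_mat_def by (auto intro: mat_adjoint_carrier)

lemma unitary_mat_adjoint: "unitary_mat n U \<Longrightarrow> unitary_mat n (mat_adjoint U)"
  unfolding unitary_mat_def mat_adjoint_adjoint by auto

lemma conj_space_subset_carrier:
  assumes S: "S \<subseteq> carrier_mat n n" and U: "unitary_mat n U"
  shows "conj_space U S \<subseteq> carrier_mat n n"
proof
  fix X assume "X \<in> conj_space U S"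
  then obtain A where A: "A \<in> carrier_mat n n" and X: "X = mat_adjoint U * A * U"
    using S unfolding conj_space_def by blast
  show "X \<in> carrier_mat n n"
    unfolding X using A unitary_matD[OF U] by (intro mult_carrier_mat)
qed

lemma one_mem_conj_space:
  assumes "1\<^sub>m n \<in> S" and U: "unitary_mat n U"
  shows "1\<^sub>m n \<in> conj_space U S"
proof -
  have "mat_adjoint U * 1\<^sub>m n * U = 1\<^sub>m n"
    using unitary_matD[OF U] by simp
  then show ?thesis using assms(1) unfolding conj_space_def by (metis image_eqI)
qed

lemma conj_space_adjoint_cancel:
  assumes S: "S \<subseteq> carrier_mat n n" and U: "unitary_mat n U"
  shows "conj_space (mat_adjoint U) (conj_space U S) = S"
proof -
  note U' = unitary_matD[OF U]
  have "U * (mat_adjoint U * A * U) * mat_adjoint U = A" if "A \<in> S" for A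
  proof -
    have A: "A \<in> carrier_mat n n" using S that by auto
    have "U * (mat_adjoint U * A * U) * mat_adjoint U
        = (U * mat_adjoint U) * A * (U * mat_adjoint U)"
      using U'(1,2) A by (simp add: assoc_mult_mat[of _ n n _ n _ n])
    also have "\<dots> = 1\<^sub>m n * A * 1\<^sub>m n" by (simp only: U'(4))
    also have "\<dots> = A" using A by simp
    finally show ?thesis .
  qed
  then show ?thesis unfolding conj_space_def image_image mat_adjoint_adjoint
    by (metis (no_types, lifting) image_cong image_ident)
qed

lemma haemers_conj_space_le:
  assumes S: "S \<subseteq> carrier_mat n n" "1\<^sub>m n \<in> S" and U: "unitary_mat n U"
  shows "haemers n (conj_space U S) \<le> haemers n S"
proof -
  obtain m B where B: "haemers_feasible n S m B"
    and opt: "crank (block_mat m n B) = haemers n S"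
    using haemers_attained[OF S(2)] .
  note U' = unitary_matD[OF U]
  have B_carrier: "B i j \<in> carrier_mat n n" if "i < m" "j < m" for i j
    using B S that unfolding haemers_feasible_def by auto
  have "diag_block_sum m n (\<lambda>i j. mat_adjoint U * B i j * U) = mat_adjoint U * 1\<^sub>m n * U"
    using diag_block_sum_mult[OF U'(2,1) B_carrier] B unfolding haemers_feasible_def by simp
  also have "\<dots> = 1\<^sub>m n" using U'(1-3) by simp
  finally have "haemers_feasible n (conj_space U S) m (\<lambda>i j. mat_adjoint U * B i j * U)"
    using B unfolding haemers_feasible_def conj_space_def by blast
  then have "haemers n (conj_space U S) \<le> crank (block_mat m n (\<lambda>i j. mat_adjoint U * B i j * U))"
    by (rule haemers_le_crank)
  also have "\<dots> = haemers n S"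
    using crank_block_mat_conj[OF U'(2,1,3) B_carrier] opt by simp
  finally show ?thesis .
qed

lemma haemers_conj_space:
  assumes S: "S \<subseteq> carrier_mat n n" "1\<^sub>m n \<in> S" and U: "unitary_mat n U"
  shows "haemers n (conj_space U S) = haemers n S"
proof (rule antisym)
  show "haemers n (conj_space U S) \<le> haemers n S" by (rule haemers_conj_space_le[OF S U])
  have "haemers n (conj_space (mat_adjoint U) (conj_space U S)) \<le> haemers n (conj_space U S)"
    by (rule haemers_conj_space_le[OF conj_space_subset_carrier[OF S(1) U]
          one_mem_conj_space[OF S(2) U] unitary_mat_adjoint[OF U]])
  then show "haemers n S \<le> haemers n (conj_space U S)"
    unfolding conj_space_adjoint_cancel[OF S(1) U] .
qed

section \<open>Direct sums\<close>

lemma mult_add_less_mult: "q < M \<Longrightarrow> a < n \<Longrightarrow> q * n + a < M * (n :: nat)"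
proof -
  assume "q < M" "a < n"
  then have "q * n + a < Suc q * n" by simp
  also have "\<dots> \<le> M * n" using \<open>q < M\<close> by (intro mult_le_mono1) simp
  finally show ?thesis .
qed

text \<open>Row \<open>x\<close> of an \<open>M \<times> M\<close> block matrix with blocks \<open>B i j \<oplus> C i j\<close> is row \<open>x mod (n + n')\<close>
  of block row \<open>x div (n + n')\<close>; \<open>block_dsum_perm\<close> sends it to the corresponding row of
  \<open>block_mat M n B \<oplus> block_mat M n' C\<close>.\<close>
definition block_dsum_perm :: "nat \<Rightarrow> nat \<Rightarrow> nat \<Rightarrow> nat \<Rightarrow> nat" where
  "block_dsum_perm M n n' x =
    (if x mod (n + n') < n then x div (n + n') * n + x mod (n + n')
     else M * n + (x div (n + n') * n' + (x mod (n + n') - n)))"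

lemma block_dsum_perm_upper:
  assumes "x < M * (n + n')" "x mod (n + n') < n"
  shows "block_dsum_perm M n n' x < M * n"
    "block_dsum_perm M n n' x div n = x div (n + n')"
    "block_dsum_perm M n n' x mod n = x mod (n + n')"
proof -
  have "x div (n + n') < M" using assms(1) by (simp add: less_mult_imp_div_less)
  then show "block_dsum_perm M n n' x < M * n"
    using assms(2) unfolding block_dsum_perm_def by (simp add: mult_add_less_mult)
qed (use assms(2) in \<open>simp_all add: block_dsum_perm_def\<close>)

lemma block_dsum_perm_lower:
  assumes "x < M * (n + n')" "\<not> x mod (n + n') < n"
  shows "\<not> block_dsum_perm M n n' x < M * n"
    "block_dsum_perm M n n' x - M * n < M * n'"
    "(block_dsum_perm M n n' x - M * n) div n' = x div (n + n')"
    "(block_dsum_perm M n n' x - M * n) mod n' = x mod (n + n') - n"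
proof -
  define j where "j = x mod (n + n') - n"
  have "0 < n + n'" using assms(1) by (cases "n + n'") auto
  then have "x mod (n + n') < n + n'" by simp
  then have j: "j < n'" using assms(2) unfolding j_def by arith
  have q: "x div (n + n') < M" using assms(1) by (simp add: less_mult_imp_div_less)
  have perm: "block_dsum_perm M n n' x = M * n + (x div (n + n') * n' + j)"
    using assms(2) unfolding block_dsum_perm_def j_def by simp
  show "\<not> block_dsum_perm M n n' x < M * n" unfolding perm by simp
  show "block_dsum_perm M n n' x - M * n < M * n'"
    unfolding perm using mult_add_less_mult[OF q j] by simp
  show "(block_dsum_perm M n n' x - M * n) div n' = x div (n + n')"
    "(block_dsum_perm M n n' x - M * n) mod n' = x mod (n + n') - n"
    unfolding perm j_def[symmetric] using j by simp_all
qed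

lemma block_dsum_perm_maps:
  "block_dsum_perm M n n' ` {..<M * (n + n')} \<subseteq> {..<M * (n + n')}"
proof
  fix p assume "p \<in> block_dsum_perm M n n' ` {..<M * (n + n')}"
  then obtain x where x: "x < M * (n + n')" and p: "p = block_dsum_perm M n n' x" by auto
  show "p \<in> {..<M * (n + n')}"
  proof (cases "x mod (n + n') < n")
    case True
    then show ?thesis using block_dsum_perm_upper(1)[OF x] p by (simp add: distrib_left)
  next
    case False
    then show ?thesis using block_dsum_perm_lower(1,2)[OF x] p by (simp add: distrib_left)
  qed
qed

lemma block_dsum_perm_inj: "inj_on (block_dsum_perm M n n') {..<M * (n + n')}"
proof (rule inj_onI)
  fix x y assume "x \<in> {..<M * (n + n')}" "y \<in> {..<M * (n + n')}"
    and eq: "block_dsum_perm M n n' x = block_dsum_perm M n n' y"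
  then have x: "x < M * (n + n')" and y: "y < M * (n + n')" by simp_all
  have "x div (n + n') = y div (n + n') \<and> x mod (n + n') = y mod (n + n')"
  proof (cases "x mod (n + n') < n")
    case True
    then have "y mod (n + n') < n"
      using eq block_dsum_perm_upper(1)[OF x] block_dsum_perm_lower(1)[OF y] by metis
    then show ?thesis
      using True eq block_dsum_perm_upper(2,3)[OF x] block_dsum_perm_upper(2,3)[OF y] by metis
  next
    case False
    then have "\<not> y mod (n + n') < n"
      using eq block_dsum_perm_upper(1)[OF y] block_dsum_perm_lower(1)[OF x] by metis
    then show ?thesis
      using False eq block_dsum_perm_lower(3,4)[OF x] block_dsum_perm_lower(3,4)[OF y] by auto
  qed
  then show "x = y" by (metis div_mult_mod_eq)
qed

lemma block_mat_four_block_index: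
  assumes B: "\<And>i j. i < M \<Longrightarrow> j < M \<Longrightarrow> B i j \<in> carrier_mat n n"
    and C: "\<And>i j. i < M \<Longrightarrow> j < M \<Longrightarrow> C i j \<in> carrier_mat n' n'"
    and x: "x < M * (n + n')" and y: "y < M * (n + n')"
  shows "block_mat M (n + n') (\<lambda>i j. four_block_mat (B i j) (0\<^sub>m n n') (0\<^sub>m n' n) (C i j)) $$ (x, y)
    = four_block_mat (block_mat M n B) (0\<^sub>m (M * n) (M * n')) (0\<^sub>m (M * n') (M * n))
        (block_mat M n' C) $$ (block_dsum_perm M n n' x, block_dsum_perm M n n' y)"
proof -
  have "0 < n + n'" using x by (cases "n + n'") auto
  then have "x mod (n + n') < n + n'" "y mod (n + n') < n + n'" by simp_all
  then have offsets: "\<not> x mod (n + n') < n \<Longrightarrow> x mod (n + n') - n < n'"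
    "\<not> y mod (n + n') < n \<Longrightarrow> y mod (n + n') - n < n'" by arith+
  have blocks: "x div (n + n') < M" "y div (n + n') < M"
    using x y by (simp_all add: less_mult_imp_div_less)
  have "block_dsum_perm M n n' x < M * (n + n')" "block_dsum_perm M n n' y < M * (n + n')"
    using block_dsum_perm_maps[of M n n'] x y by auto
  then have "block_dsum_perm M n n' x < M * n + M * n'" "block_dsum_perm M n n' y < M * n + M * n'"
    by (simp_all add: distrib_left)
  note facts = this block_dsum_perm_upper[OF x] block_dsum_perm_upper[OF y]
    block_dsum_perm_lower[OF x] block_dsum_perm_lower[OF y]
  show ?thesis
    using x y offsets B[OF blocks] C[OF blocks]
    by (cases "x mod (n + n') < n"; cases "y mod (n + n') < n")
      (auto simp: block_mat_index facts)
qed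

lemma crank_block_mat_four_block:
  assumes B: "\<And>i j. i < M \<Longrightarrow> j < M \<Longrightarrow> B i j \<in> carrier_mat n n"
    and C: "\<And>i j. i < M \<Longrightarrow> j < M \<Longrightarrow> C i j \<in> carrier_mat n' n'"
  shows "crank (block_mat M (n + n') (\<lambda>i j. four_block_mat (B i j) (0\<^sub>m n n') (0\<^sub>m n' n) (C i j)))
    = crank (block_mat M n B) + crank (block_mat M n' C)" (is "crank ?X = _")
proof -
  let ?Y = "four_block_mat (block_mat M n B)
    (0\<^sub>m (M * n) (M * n')) (0\<^sub>m (M * n') (M * n)) (block_mat M n' C)"
  have "?Y \<in> carrier_mat (M * (n + n')) (M * (n + n'))" by (simp add: distrib_left)
  moreover have "?X = mat (M * (n + n')) (M * (n + n'))
      (\<lambda>(x, y). ?Y $$ (block_dsum_perm M n n' x, block_dsum_perm M n n' y))"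
    by (rule eq_matI) (simp_all add: block_mat_four_block_index[OF B C])
  ultimately have "crank ?X = crank ?Y"
    by (simp add: crank_reindex[OF _ block_dsum_perm_maps block_dsum_perm_inj])
  also have "\<dots> = crank (block_mat M n B) + crank (block_mat M n' C)"
    by (rule crank_four_block_diag) simp_all
  finally show ?thesis .
qed

lemma four_block_diag_eq_one_iff:
  assumes A: "A \<in> carrier_mat n n" and D: "D \<in> carrier_mat n' n'"
  shows "four_block_mat A (0\<^sub>m n n') (0\<^sub>m n' n) D = 1\<^sub>m (n + n') \<longleftrightarrow> A = 1\<^sub>m n \<and> D = 1\<^sub>m n'"
proof
  assume one: "four_block_mat A (0\<^sub>m n n') (0\<^sub>m n' n) D = 1\<^sub>m (n + n')"
  have "A $$ (a, b) = 1\<^sub>m n $$ (a, b)" if "a < n" "b < n" for a b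
    using arg_cong[OF one, of "\<lambda>X. X $$ (a, b)"] A D that by auto
  moreover have "D $$ (a, b) = 1\<^sub>m n' $$ (a, b)" if "a < n'" "b < n'" for a b
    using arg_cong[OF one, of "\<lambda>X. X $$ (n + a, n + b)"] A D that by auto
  ultimately show "A = 1\<^sub>m n \<and> D = 1\<^sub>m n'" using A D by (auto intro!: eq_matI)
qed simp

lemma four_block_mem_dsum_space:
  "A \<in> S \<Longrightarrow> D \<in> T \<Longrightarrow> four_block_mat A (0\<^sub>m n n') (0\<^sub>m n' n) D \<in> dsum_space n n' S T"
  unfolding dsum_space_def by force

lemma dsum_space_blocks:
  assumes "\<forall>i<M. \<forall>j<M. D i j \<in> dsum_space n n' S T"
  obtains B C where "\<forall>i<M. \<forall>j<M. B i j \<in> S \<and> C i j \<in> T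
    \<and> D i j = four_block_mat (B i j) (0\<^sub>m n n') (0\<^sub>m n' n) (C i j)"
proof -
  have "\<forall>i<M. \<forall>j<M. \<exists>A A'. A \<in> S \<and> A' \<in> T
      \<and> D i j = four_block_mat A (0\<^sub>m n n') (0\<^sub>m n' n) A'"
    using assms unfolding dsum_space_def by fast
  then show ?thesis using that by metis
qed

lemma haemers_feasible_dsum_iff:
  assumes S: "S \<subseteq> carrier_mat n n" and T: "T \<subseteq> carrier_mat n' n'"
    and BC: "\<And>i j. i < M \<Longrightarrow> j < M \<Longrightarrow> B i j \<in> S \<and> C i j \<in> T"
  shows "haemers_feasible (n + n') (dsum_space n n' S T) M
      (\<lambda>i j. four_block_mat (B i j) (0\<^sub>m n n') (0\<^sub>m n' n) (C i j))
    \<longleftrightarrow> haemers_feasible n S M B \<and> haemers_feasible n' T M C"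
proof -
  have "diag_block_sum M (n + n') (\<lambda>i j. four_block_mat (B i j) (0\<^sub>m n n') (0\<^sub>m n' n) (C i j))
    = four_block_mat (diag_block_sum M n B) (0\<^sub>m n n') (0\<^sub>m n' n) (diag_block_sum M n' C)"
    using S T BC by (intro diag_block_sum_four_block) auto
  then show ?thesis using BC unfolding haemers_feasible_def
    by (simp add: four_block_diag_eq_one_iff four_block_mem_dsum_space)
qed

lemma haemers_dsum_ge:
  assumes S: "nc_graph n S" and T: "nc_graph n' T"
  shows "haemers n S + haemers n' T \<le> haemers (n + n') (dsum_space n n' S T)"
proof -
  note S' = nc_graphD[OF S] and T' = nc_graphD[OF T]
  have "1\<^sub>m (n + n') \<in> dsum_space n n' S T"
    using four_block_mem_dsum_space[of "1\<^sub>m n" S "1\<^sub>m n'" T n n'] S'(3) T'(3) by simp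
  then obtain M D where D: "haemers_feasible (n + n') (dsum_space n n' S T) M D"
    and opt: "crank (block_mat M (n + n') D) = haemers (n + n') (dsum_space n n' S T)"
    by (rule haemers_attained)
  have "\<forall>i<M. \<forall>j<M. D i j \<in> dsum_space n n' S T"
    using D unfolding haemers_feasible_def by blast
  then obtain B C where BC: "\<forall>i<M. \<forall>j<M. B i j \<in> S \<and> C i j \<in> T
      \<and> D i j = four_block_mat (B i j) (0\<^sub>m n n') (0\<^sub>m n' n) (C i j)"
    by (rule dsum_space_blocks)
  then have "haemers_feasible n S M B \<and> haemers_feasible n' T M C"
    using D haemers_feasible_dsum_iff[OF S'(1) T'(1)] haemers_feasible_cong[of M D] by simp
  then have "haemers n S + haemers n' T \<le> crank (block_mat M n B) + crank (block_mat M n' C)"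
    by (simp add: add_mono haemers_le_crank)
  also have "\<dots>
      = crank (block_mat M (n + n') (\<lambda>i j. four_block_mat (B i j) (0\<^sub>m n n') (0\<^sub>m n' n) (C i j)))"
    using BC S'(1) T'(1) by (intro crank_block_mat_four_block[symmetric]) auto
  also have "\<dots> = crank (block_mat M (n + n') D)"
    using BC by (intro arg_cong[where f = crank] block_mat_cong) simp
  finally show ?thesis unfolding opt .
qed

lemma haemers_dsum_le:
  assumes S: "nc_graph n S" and T: "nc_graph n' T"
  shows "haemers (n + n') (dsum_space n n' S T) \<le> haemers n S + haemers n' T"
proof -
  note S' = nc_graphD[OF S] and T' = nc_graphD[OF T]
  obtain m B where B: "haemers_feasible n S m B"
    and optB: "crank (block_mat m n B) = haemers n S"
    using haemers_attained[OF S'(3)] .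
  obtain m' C where C: "haemers_feasible n' T m' C"
    and optC: "crank (block_mat m' n' C) = haemers n' T"
    using haemers_attained[OF T'(3)] .
  define M where "M = max m m'"
  have "m \<le> M" "m' \<le> M" unfolding M_def by simp_all
  then obtain d d' where M: "M = m + d" "M = m' + d'" by (metis le_iff_add)
  define B' where "B' = (\<lambda>i j. if i < m \<and> j < m then B i j else 0\<^sub>m n n)"
  define C' where "C' = (\<lambda>i j. if i < m' \<and> j < m' then C i j else 0\<^sub>m n' n')"
  have B': "haemers_feasible n S M B'"
    unfolding M(1) B'_def by (rule haemers_feasible_pad[OF S'(2) B])
  have C': "haemers_feasible n' T M C'"
    unfolding M(2) C'_def by (rule haemers_feasible_pad[OF T'(2) C])
  have mem: "B' i j \<in> S \<and> C' i j \<in> T" if "i < M" "j < M" for i j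
    using B' C' that unfolding haemers_feasible_def by blast
  have "haemers (n + n') (dsum_space n n' S T)
      \<le> crank (block_mat M (n + n')
            (\<lambda>i j. four_block_mat (B' i j) (0\<^sub>m n n') (0\<^sub>m n' n) (C' i j)))"
    using B' C' haemers_feasible_dsum_iff[OF S'(1) T'(1) mem] by (simp add: haemers_le_crank)
  also have "\<dots> = crank (block_mat M n B') + crank (block_mat M n' C')"
    using mem S'(1) T'(1) by (intro crank_block_mat_four_block) auto
  also have "\<dots> = haemers n S + haemers n' T"
    using crank_block_mat_pad[of m d n B] crank_block_mat_pad[of m' d' n' C] optB optC
    unfolding B'_def C'_def M[symmetric] by simp
  finally show ?thesis .
qed

theorem mainTheorem8:
  fixes n n' :: nat and S T :: "complex mat set"
  assumes "nc_graph n S" and "nc_graph n' T"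
  shows "(\<forall>U. unitary_mat n U \<longrightarrow> haemers n S = haemers n (conj_space U S))
    \<and> haemers (n + n') (dsum_space n n' S T) = haemers n S + haemers n' T"
proof (intro conjI allI impI)
  fix U assume "unitary_mat n U"
  then show "haemers n S = haemers n (conj_space U S)"
    using haemers_conj_space nc_graphD[OF assms(1)] by simp
next
  show "haemers (n + n') (dsum_space n n' S T) = haemers n S + haemers n' T"
    using haemers_dsum_le[OF assms] haemers_dsum_ge[OF assms] by (rule antisym)
qed

end
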